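(* For every strict partition $\lambda$, $q_1(\lambda)=|\lambda|$.
   Context: A strict partition is a finite strictly decreasing sequence of positive integers $\lambda=(\lambda_1>\cdots>\lambda_\ell)$ (the empty sequence is allowed); $|\lambda|=\sum_i\lambda_i$, $\ell(\lambda)=\ell$. The (shifted Young) diagram of $\lambda$ is the set of boxes $(i,j)$ with $1\le i\le\ell(\lambda)$, $i+1\le j\le i+\lambda_i$ (row $i$, column $j$). An outer corner of $\lambda$ is a box of the diagram whose removal leaves the diagram of a strict partition. Let $(\alpha_1,\beta_1),\dots,(\alpha_m,\beta_m)$ be the outer corners with $\alpha_1>\cdots>\alpha_m$, $y_j=\beta_j-\alpha_j$; set $\alpha_{m+1}=0$, $\beta_0=\ell(\lambda)+1$, and $x_i=\beta_i-\alpha_{i+1}$ for $0\le i\le m$. Define $q_1(\lambda)=\sum_{i=0}^m\binom{x_i}{2}-\sum_{i=1}^m\binom{y_i}{2}$. *)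

theory Defs
  imports Main "HOL-Library.Product_Lexorder"
begin

text \<open>A strict partition is a list of positive integers, strictly decreasing.
  lambda_i (1-based) is the list entry at position i-1.\<close>
definition strict_partition :: "nat list \<Rightarrow> bool" where
  "strict_partition la \<longleftrightarrow> sorted_wrt (>) la \<and> (\<forall>x\<in>set la. 0 < x)"

definition size_part :: "nat list \<Rightarrow> nat" where
  "size_part la = sum_list la"

definition shifted_diagram :: "nat list \<Rightarrow> (nat \<times> nat) set" where
  "shifted_diagram la =
     {(i, j). 1 \<le> i \<and> i \<le> length la \<and> i + 1 \<le> j \<and> j \<le> i + la ! (i - 1)}"

definition outer_corners :: "nat list \<Rightarrow> (nat \<times> nat) set" where
  "outer_corners la = {b \<in> shifted_diagram la.
     \<exists>mu. strict_partition mu \<and> shifted_diagram mu = shifted_diagram la - {b}}"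

definition corner_list :: "nat list \<Rightarrow> (nat \<times> nat) list" where
  "corner_list la = rev (sorted_list_of_set (outer_corners la))"

definition alpha :: "nat list \<Rightarrow> nat \<Rightarrow> nat" where
  "alpha la j = (if 1 \<le> j \<and> j \<le> length (corner_list la)
                 then fst (corner_list la ! (j - 1)) else 0)"

definition beta :: "nat list \<Rightarrow> nat \<Rightarrow> nat" where
  "beta la j = (if j = 0 then length la + 1 else snd (corner_list la ! (j - 1)))"

definition xc :: "nat list \<Rightarrow> nat \<Rightarrow> int" where
  "xc la i = int (beta la i) - int (alpha la (i + 1))"

definition yc :: "nat list \<Rightarrow> nat \<Rightarrow> int" where
  "yc la j = int (beta la j) - int (alpha la j)"

definition binom2 :: "int \<Rightarrow> int" where
  "binom2 x = x * (x - 1) div 2"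

definition q1 :: "nat list \<Rightarrow> int" where
  "q1 la = (let m = length (corner_list la) in
     (\<Sum>i\<in>{0..m}. binom2 (xc la i)) - (\<Sum>j\<in>{1..m}. binom2 (yc la j)))"

end

theory Submission
  imports Defs
begin

text \<open>
  Call row \<open>i\<close> a corner row if its last box is an outer corner: the last row, and every row
  that is at least two boxes longer than the next one. Consecutive corner rows
  \<open>\<alpha>\<^bsub>j+1\<^esub> < \<alpha>\<^bsub>j\<^esub>\<close> delimit a block of rows \<open>\<alpha>\<^bsub>j+1\<^esub> + 1, \<dots>, \<alpha>\<^bsub>j\<^esub>\<close> which all end in column
  \<open>\<beta>\<^bsub>j\<^esub>\<close>; their lengths are therefore \<open>x\<^bsub>j\<^esub> - 1, \<dots>, y\<^bsub>j\<^esub>\<close>, adding up to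
  \<open>binom(x\<^bsub>j\<^esub>, 2) - binom(y\<^bsub>j\<^esub>, 2)\<close>. Since \<open>\<alpha>\<^bsub>1\<^esub>\<close> is the last row, \<open>x\<^bsub>0\<^esub> = 1\<close> contributes nothing,
  and the blocks exhaust all rows.
\<close>

definition row_end :: "nat list \<Rightarrow> nat \<Rightarrow> nat" where
  "row_end la i = i + la ! (i - 1)"

definition corner_rows :: "nat list \<Rightarrow> nat set" where
  "corner_rows la =
     {i. 1 \<le> i \<and> i \<le> length la \<and> (i = length la \<or> la ! i + 1 < la ! (i - 1))}"

definition corner_row_list :: "nat list \<Rightarrow> nat list" where
  "corner_row_list la = rev (sorted_list_of_set (corner_rows la))"

definition row_sum :: "nat list \<Rightarrow> nat \<Rightarrow> int" where
  "row_sum la n = (\<Sum>i<n. int (la ! i))"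

lemma mem_shifted_diagram:
  "(i, j) \<in> shifted_diagram la \<longleftrightarrow> 1 \<le> i \<and> i \<le> length la \<and> i < j \<and> j \<le> row_end la i"
  unfolding shifted_diagram_def row_end_def by auto

lemma strict_partition_nth_less:
  assumes "strict_partition la" "p < q" "q < length la"
  shows "la ! q < la ! p"
  using assms unfolding strict_partition_def sorted_wrt_iff_nth_less by blast

lemma strict_partition_nth_pos:
  assumes "strict_partition la" "p < length la"
  shows "0 < la ! p"
  using assms unfolding strict_partition_def by auto

lemma strict_partition_butlast:
  "strict_partition la \<Longrightarrow> strict_partition (butlast la)"
  unfolding strict_partition_def butlast_conv_take by (auto dest: in_set_takeD)

subsection \<open>Outer corners\<close>

lemma outer_corner_eq_row_end:
  assumes "(i, j) \<in> outer_corners la"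
  shows "j = row_end la i"
proof (rule ccontr)
  obtain mu where ij: "(i, j) \<in> shifted_diagram la"
    and mu: "shifted_diagram mu = shifted_diagram la - {(i, j)}"
    using assms unfolding outer_corners_def by blast
  assume "j \<noteq> row_end la i"
  then have "(i, j + 1) \<in> shifted_diagram mu"
    using ij mu by (auto simp: mem_shifted_diagram)
  then have "(i, j) \<in> shifted_diagram mu"
    using ij by (auto simp: mem_shifted_diagram)
  then show False using mu by simp
qed

text \<open>If the next row were exactly one box shorter, removing the last box of row \<open>i\<close> would
  make two rows end in the same column, which no shifted diagram does.\<close>
lemma outer_corner_row_mem_corner_rows:
  assumes sp: "strict_partition la" and corner: "(i, j) \<in> outer_corners la"
  shows "i \<in> corner_rows la"
proof (rule ccontr)
  obtain mu where mu: "strict_partition mu"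
    and D: "shifted_diagram mu = shifted_diagram la - {(i, j)}"
    using corner unfolding outer_corners_def by blast
  have j: "j = row_end la i" by (rule outer_corner_eq_row_end[OF corner])
  have i: "1 \<le> i" "i \<le> length la"
    using corner unfolding outer_corners_def by (auto simp: mem_shifted_diagram)
  assume "i \<notin> corner_rows la"
  then have il: "i < length la" and "\<not> la ! i + 1 < la ! (i - 1)"
    using i unfolding corner_rows_def by auto
  moreover have "la ! i < la ! (i - 1)"
    using strict_partition_nth_less[OF sp, of "i - 1" i] il i by simp
  ultimately have step: "la ! (i - 1) = la ! i + 1" by simp
  have "(i + 1, row_end la (i + 1)) \<in> shifted_diagram mu"
    using D i il j strict_partition_nth_pos[OF sp, of i]
    by (auto simp: mem_shifted_diagram row_end_def)
  then have mu_i: "i < length mu" "la ! i \<le> mu ! i"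
    by (auto simp: mem_shifted_diagram row_end_def)
  have "mu ! i < mu ! (i - 1)"
    using strict_partition_nth_less[OF mu, of "i - 1" i] mu_i i by simp
  then have "(i, row_end la i) \<in> shifted_diagram mu"
    using i mu_i step by (auto simp: mem_shifted_diagram row_end_def)
  then show False using D j by simp
qed

lemma strict_partition_decrement_corner_row:
  assumes sp: "strict_partition la" and i: "i \<in> corner_rows la" and long: "2 \<le> la ! (i - 1)"
  defines "mu \<equiv> la[i - 1 := la ! (i - 1) - 1]"
  shows "strict_partition mu"
    and "shifted_diagram mu = shifted_diagram la - {(i, row_end la i)}"
proof -
  have i: "1 \<le> i" "i \<le> length la" "i = length la \<or> la ! i + 1 < la ! (i - 1)"
    using i unfolding corner_rows_def by auto
  have "mu ! q < mu ! p" if pq: "p < q" "q < length la" for p q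
  proof (cases "p = i - 1")
    case True
    then have "la ! i + 1 < la ! (i - 1)" using pq i by auto
    moreover have "la ! q \<le> la ! i"
      using strict_partition_nth_less[OF sp, of i q] pq True i by (cases "q = i") force+
    ultimately show ?thesis using pq True unfolding mu_def by auto
  next
    case False
    then show ?thesis using strict_partition_nth_less[OF sp, of p q] pq unfolding mu_def
      by (cases "q = i - 1") (auto simp: nth_list_update)
  qed
  moreover have "0 < x" if "x \<in> set mu" for x
    using that long sp set_update_subset_insert[of la "i - 1" "la ! (i - 1) - 1"]
    unfolding mu_def strict_partition_def by auto
  ultimately show "strict_partition mu"
    unfolding strict_partition_def sorted_wrt_iff_nth_less mu_def by auto
  show "shifted_diagram mu = shifted_diagram la - {(i, row_end la i)}"
    using long i unfolding shifted_diagram_def mu_def row_end_def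
    by (auto simp: nth_list_update split: if_splits)
qed

lemma shifted_diagram_butlast:
  assumes "la \<noteq> []" "last la = 1"
  shows "shifted_diagram (butlast la) = shifted_diagram la - {(length la, row_end la (length la))}"
proof (rule set_eqI)
  fix b :: "nat \<times> nat"
  obtain r c where b: "b = (r, c)" by fastforce
  have "la ! (length la - 1) = 1" using assms by (simp add: last_conv_nth)
  then show "b \<in> shifted_diagram (butlast la) \<longleftrightarrow>
      b \<in> shifted_diagram la - {(length la, row_end la (length la))}"
    unfolding b
    by (cases "r = length la") (auto simp: mem_shifted_diagram row_end_def nth_butlast)
qed

lemma corner_row_mem_outer_corners:
  assumes sp: "strict_partition la" and i: "i \<in> corner_rows la"
  shows "(i, row_end la i) \<in> outer_corners la"
proof -
  have i_bounds: "1 \<le> i" "i \<le> length la" "i = length la \<or> la ! i + 1 < la ! (i - 1)"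
    using i unfolding corner_rows_def by auto
  have pos: "0 < la ! (i - 1)" using strict_partition_nth_pos[OF sp, of "i - 1"] i_bounds by simp
  have "\<exists>mu. strict_partition mu \<and> shifted_diagram mu = shifted_diagram la - {(i, row_end la i)}"
  proof (cases "2 \<le> la ! (i - 1)")
    case True
    then show ?thesis using strict_partition_decrement_corner_row[OF sp i] by blast
  next
    case False
    then have one: "la ! (i - 1) = 1" and i_last: "i = length la" using pos i_bounds by auto
    have ne: "la \<noteq> []" using i_bounds by auto
    then have "last la = 1" using one i_last by (simp add: last_conv_nth)
    then show ?thesis
      using shifted_diagram_butlast[OF ne] strict_partition_butlast[OF sp] i_last by blast
  qed
  moreover have "(i, row_end la i) \<in> shifted_diagram la"
    using i_bounds pos by (simp add: mem_shifted_diagram row_end_def)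
  ultimately show ?thesis unfolding outer_corners_def by blast
qed

lemma outer_corners_eq:
  assumes "strict_partition la"
  shows "outer_corners la = (\<lambda>i. (i, row_end la i)) ` corner_rows la"
proof -
  have "b \<in> (\<lambda>i. (i, row_end la i)) ` corner_rows la" if b: "b \<in> outer_corners la" for b
  proof -
    obtain i j where "b = (i, j)" by fastforce
    then show ?thesis
      using b outer_corner_eq_row_end[of i j la] outer_corner_row_mem_corner_rows[OF assms, of i j]
      by auto
  qed
  then show ?thesis using corner_row_mem_outer_corners[OF assms] by blast
qed

lemma sorted_wrt_greater_nth_antimono:
  fixes xs :: "'a :: order list"
  assumes "sorted_wrt (>) xs" "p \<le> q" "q < length xs"
  shows "xs ! q \<le> xs ! p"
  using assms sorted_wrt_nth_less[OF assms(1), of p q] by (cases "p = q") auto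

lemma finite_corner_rows: "finite (corner_rows la)"
  by (rule finite_subset[of _ "{1..length la}"]) (auto simp: corner_rows_def)

lemma set_corner_row_list: "set (corner_row_list la) = corner_rows la"
  by (simp add: corner_row_list_def finite_corner_rows)

lemma sorted_corner_row_list: "sorted_wrt (>) (corner_row_list la)"
  by (simp add: corner_row_list_def sorted_wrt_rev)

lemma corner_list_eq:
  assumes "strict_partition la"
  shows "corner_list la = map (\<lambda>i. (i, row_end la i)) (corner_row_list la)"
proof -
  define s where "s = sorted_list_of_set (corner_rows la)"
  let ?g = "\<lambda>i. (i, row_end la i)"
  have "sorted_wrt (<) (map ?g s)"
    unfolding s_def sorted_wrt_map
    by (rule sorted_wrt_mono_rel[OF _ strict_sorted_list_of_set]) auto
  moreover have "outer_corners la = set (map ?g s)"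
    using outer_corners_eq[OF assms] by (simp add: s_def finite_corner_rows)
  ultimately have "sorted_list_of_set (outer_corners la) = map ?g s"
    by (simp add: strict_sorted_equal)
  then show ?thesis by (simp add: corner_list_def corner_row_list_def s_def rev_map)
qed

lemma length_corner_list:
  assumes "strict_partition la"
  shows "length (corner_list la) = length (corner_row_list la)"
  by (simp add: corner_list_eq[OF assms])

lemma alpha_eq:
  assumes "strict_partition la"
  shows "alpha la j =
    (if 1 \<le> j \<and> j \<le> length (corner_row_list la) then corner_row_list la ! (j - 1) else 0)"
  by (auto simp: alpha_def corner_list_eq[OF assms])

lemma beta_eq:
  assumes "strict_partition la" "1 \<le> j" "j \<le> length (corner_list la)"
  shows "beta la j = row_end la (alpha la j)"
  using assms by (simp add: alpha_def beta_def corner_list_eq)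

lemma alpha_mem_corner_rows:
  assumes "strict_partition la" "1 \<le> j" "j \<le> length (corner_list la)"
  shows "alpha la j \<in> corner_rows la"
  using assms by (simp add: alpha_eq length_corner_list flip: set_corner_row_list)

lemma alpha_one:
  assumes "strict_partition la"
  shows "alpha la 1 = length la"
proof (cases "la = []")
  case True
  have "outer_corners [] = {}" by (simp add: outer_corners_def shifted_diagram_def)
  then show ?thesis using True by (simp add: alpha_def corner_list_def)
next
  case False
  let ?rs = "corner_row_list la"
  have "length la \<in> set ?rs"
    using False by (simp add: set_corner_row_list corner_rows_def Suc_le_eq)
  then obtain k where k: "k < length ?rs" "?rs ! k = length la" by (metis in_set_conv_nth)
  have "0 < length ?rs" using k(1) by linarith
  then have "?rs ! 0 \<in> corner_rows la" by (metis nth_mem set_corner_row_list)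
  then have "?rs ! 0 \<le> length la" by (simp add: corner_rows_def)
  moreover have "?rs ! k \<le> ?rs ! 0"
    using sorted_wrt_greater_nth_antimono[OF sorted_corner_row_list, of 0 k la] k by simp
  ultimately show ?thesis using k by (simp add: alpha_eq[OF assms])
qed

lemma alpha_beyond: "length (corner_list la) < j \<Longrightarrow> alpha la j = 0"
  by (simp add: alpha_def)

lemma alpha_Suc_less:
  assumes sp: "strict_partition la" and j: "1 \<le> j" "j \<le> length (corner_list la)"
  shows "alpha la (Suc j) < alpha la j"
proof (cases "Suc j \<le> length (corner_list la)")
  case True
  then show ?thesis
    using j sorted_corner_row_list[of la]
    by (auto simp: alpha_eq[OF sp] length_corner_list[OF sp] sorted_wrt_iff_nth_less)
next
  case False
  then show ?thesis
    using alpha_mem_corner_rows[OF sp j] by (simp add: alpha_def corner_rows_def)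
qed

lemma no_corner_row_between_alphas:
  assumes sp: "strict_partition la" and j: "1 \<le> j" "j \<le> length (corner_list la)"
    and i: "alpha la (Suc j) < i" "i < alpha la j"
  shows "i \<notin> corner_rows la"
proof
  let ?rs = "corner_row_list la"
  note antimono = sorted_wrt_greater_nth_antimono[OF sorted_corner_row_list]
  assume "i \<in> corner_rows la"
  then obtain k where k: "k < length ?rs" "?rs ! k = i"
    by (metis in_set_conv_nth set_corner_row_list)
  have j_len: "j - 1 < length ?rs" using j by (simp add: length_corner_list[OF sp])
  have "j \<le> k"
  proof (rule ccontr)
    assume "\<not> j \<le> k"
    then have "?rs ! (j - 1) \<le> ?rs ! k" using antimono[of k "j - 1"] j_len by simp
    then show False using i j k by (simp add: alpha_eq[OF sp] length_corner_list[OF sp])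
  qed
  then have "alpha la (Suc j) = ?rs ! j" and "?rs ! k \<le> ?rs ! j"
    using k antimono[of j k] by (auto simp: alpha_eq[OF sp])
  then show False using i k by simp
qed

subsection \<open>Summing the rows between consecutive corners\<close>

text \<open>A row that is not a corner row is exactly one box longer than the next one.\<close>
lemma row_end_const_between_corner_rows:
  assumes sp: "strict_partition la" and q: "q \<le> length la"
    and gap: "\<And>i. p < i \<Longrightarrow> i < q \<Longrightarrow> i \<notin> corner_rows la"
    and i: "p < i" "i \<le> q"
  shows "row_end la i = row_end la q"
  using \<open>i \<le> q\<close>
proof (induction i rule: inc_induct)
  case (step n)
  have n: "1 \<le> n" "n < length la" using i step q by auto
  have "\<not> la ! n + 1 < la ! (n - 1)"
    using gap[of n] i step n unfolding corner_rows_def by auto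
  moreover have "la ! n < la ! (n - 1)"
    using strict_partition_nth_less[OF sp, of "n - 1" n] n by simp
  ultimately have "row_end la n = row_end la (Suc n)" using n by (simp add: row_end_def)
  then show ?case using step by simp
qed simp

lemma binom2_add_one: "binom2 (y + 1) = binom2 y + y"
proof -
  have "(y + 1) * (y + 1 - 1) = y * (y - 1) + y * 2" by (simp add: algebra_simps)
  then show ?thesis unfolding binom2_def by simp
qed

lemma sum_arith_progression_binom2:
  assumes "p \<le> q"
  shows "(\<Sum>i\<in>{p..<q}. B - int (Suc i)) = binom2 (B - int p) - binom2 (B - int q)"
  using assms
proof (induction q rule: dec_induct)
  case (step n)
  have "binom2 (B - int n) = binom2 (B - int (Suc n)) + (B - int (Suc n))"
    using binom2_add_one[of "B - int (Suc n)"] by simp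
  then show ?case using step by simp
qed simp

lemma row_sum_diff:
  assumes "p \<le> q"
  shows "row_sum la q - row_sum la p = (\<Sum>i\<in>{p..<q}. int (la ! i))"
  using sum_diff_nat_ivl[OF _ assms, of 0] by (simp add: row_sum_def atLeast0LessThan)

lemma row_sum_length: "row_sum la (length la) = int (sum_list la)"
  by (simp add: row_sum_def sum_list_sum_nth atLeast0LessThan)

lemma binom2_xc_minus_binom2_yc:
  assumes sp: "strict_partition la" and j: "1 \<le> j" "j \<le> length (corner_list la)"
  shows "binom2 (xc la j) - binom2 (yc la j) =
    row_sum la (alpha la j) - row_sum la (alpha la (Suc j))"
proof -
  define p q where "p = alpha la (Suc j)" and "q = alpha la j"
  define B where "B = int (row_end la q)"
  have pq: "p \<le> q" using alpha_Suc_less[OF sp j] by (simp add: p_def q_def)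
  have q_len: "q \<le> length la"
    using alpha_mem_corner_rows[OF sp j] by (simp add: q_def corner_rows_def)
  have gap: "\<And>i. p < i \<Longrightarrow> i < q \<Longrightarrow> i \<notin> corner_rows la"
    using no_corner_row_between_alphas[OF sp j] by (simp add: p_def q_def)
  have row_length: "int (la ! i) = B - int (Suc i)" if "i \<in> {p..<q}" for i
  proof -
    have "row_end la (Suc i) = row_end la q"
      using that by (intro row_end_const_between_corner_rows[OF sp q_len gap]) auto
    then show ?thesis by (simp add: row_end_def B_def)
  qed
  have "row_sum la q - row_sum la p = (\<Sum>i\<in>{p..<q}. int (la ! i))"
    by (rule row_sum_diff[OF pq])
  also have "\<dots> = (\<Sum>i\<in>{p..<q}. B - int (Suc i))"
    using row_length by (rule sum.cong[OF refl])
  also have "\<dots> = binom2 (B - int p) - binom2 (B - int q)"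
    by (rule sum_arith_progression_binom2[OF pq])
  finally show ?thesis
    using beta_eq[OF sp j] by (simp add: xc_def yc_def B_def p_def q_def)
qed

theorem lemma4p2:
  fixes la :: "nat list"
  assumes "strict_partition la"
  shows "q1 la = int (size_part la)"
proof -
  let ?m = "length (corner_list la)"
  let ?f = "\<lambda>j. binom2 (xc la j) - binom2 (yc la j)"
  have "binom2 (xc la 0) = 0"
    using alpha_one[OF assms] by (simp add: xc_def beta_def binom2_def)
  then have "q1 la = (\<Sum>j\<in>{1..?m}. ?f j)"
    by (simp add: q1_def Let_def sum.atLeast_Suc_atMost sum_subtractf)
  also have "\<dots> = (\<Sum>j\<in>{1..?m}. row_sum la (alpha la j) - row_sum la (alpha la (j + 1)))"
    using binom2_xc_minus_binom2_yc[OF assms] by (intro sum.cong) auto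
  also have "\<dots> = row_sum la (alpha la 1) - row_sum la (alpha la (?m + 1))"
    using sum_natinterval_diff[of "\<lambda>j. row_sum la (alpha la j)" 1 ?m]
    by (cases "?m = 0") simp_all
  also have "\<dots> = int (sum_list la)"
    using alpha_one[OF assms] alpha_beyond
    by (simp add: row_sum_length row_sum_def[of _ 0])
  finally show ?thesis by (simp add: size_part_def)
qed

end
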